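(* Let $D$ be a distribution over $\mathcal{Z}$ and let $f:\mathbb{R}^d\times\mathcal{Z}\to\mathbb{R}$ be such that $f(\cdot;z)$ is convex and $L$-Lipschitz for every $z$. Fix $\eta>0$, $T\in\mathbb{N}$. Then there is a universal constant $C$ such that the GD iterates on the empirical risk and on the population risk satisfy \[ \forall t\in[T]:\quad \mathbb{E}_{S\sim D^n}\big[\|w_t^S-w_t^D\|\big]\le C\Big(\frac{\eta Lt}{\sqrt n}+\eta L\sqrt t\Big). \] (Explicitly, one may take $\mathbb{E}\|w_{t+1}^S-w_{t+1}^D\|\le \frac{4\eta L(t+1)}{\sqrt n}+4\eta L\sqrt{t+1}$.)
   Context: Empirical risk on $S=(z_1,\dots,z_n)$: $F_S(w)=\frac1n\sum_i f(w;z_i)$; population risk $F_D(w)=\mathbb{E}_{z\sim D}f(w;z)$. Fix a (measurable) subgradient selection $g(w;z)\in\partial_w f(w;z)$. GD on the sample: $w_0^S=0$, $w_{t+1}^S=w_t^S-\eta\frac1n\sum_{i=1}^n g(w_t^S;z_i)$. GD on the population: $w_0^D=0$, $w_{t+1}^D=w_t^D-\eta\,\mathbb{E}_{z\sim D}[g(w_t^D;z)]$. *)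

theory Defs
  imports "HOL-Probability.Probability"
begin

definition is_subgradient :: "('a::euclidean_space \<Rightarrow> real) \<Rightarrow> 'a \<Rightarrow> 'a \<Rightarrow> bool" where
  "is_subgradient h w v \<longleftrightarrow> (\<forall>u. h u \<ge> h w + inner v (u - w))"

primrec gd_sample :: "real \<Rightarrow> ('a::euclidean_space \<Rightarrow> 'z \<Rightarrow> 'a) \<Rightarrow> nat \<Rightarrow> (nat \<Rightarrow> 'z) \<Rightarrow> nat \<Rightarrow> 'a" where
  "gd_sample \<eta> g n S 0 = 0"
| "gd_sample \<eta> g n S (Suc t) =
     gd_sample \<eta> g n S t - \<eta> *\<^sub>R ((1 / real n) *\<^sub>R (\<Sum>i<n. g (gd_sample \<eta> g n S t) (S i)))"

primrec gd_pop :: "real \<Rightarrow> ('a::euclidean_space \<Rightarrow> 'z \<Rightarrow> 'a) \<Rightarrow> 'z measure \<Rightarrow> nat \<Rightarrow> 'a" where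
  "gd_pop \<eta> g D 0 = 0"
| "gd_pop \<eta> g D (Suc t) =
     gd_pop \<eta> g D t - \<eta> *\<^sub>R (\<integral>z. g (gd_pop \<eta> g D t) z \<partial>D)"

end

theory Submission
  imports Defs
begin

text \<open>
  Write \<open>d t = \<parallel>w_t^S - w_t^D\<parallel>\<close> and let \<open>\<Delta> t S\<close> be the sampling error of the gradient
  at the population iterate: the empirical mean of \<open>g(w_t^D; z_i)\<close> minus its expectation.
  Subgradients of convex functions form a monotone operator, so expanding the square of
  \<open>d (t+1)\<close> gives \<open>d (t+1)^2 \<le> d t^2 + 2\<eta> d t \<parallel>\<Delta> t S\<parallel> + (2\<eta>L)^2\<close>, and this recursion
  solves to \<open>d t \<le> 2\<eta> \<Sum>s<t. \<parallel>\<Delta> s S\<parallel> + 2\<eta>L \<surd>t\<close>. Since \<open>w_s^D\<close> does not depend on the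
  sample, \<open>\<Delta> s S\<close> is a mean of \<open>n\<close> i.i.d. centred vectors of norm at most \<open>2L\<close>; the
  cross terms of its second moment vanish, so \<open>\<bbbE>\<parallel>\<Delta> s S\<parallel> \<le> 2L/\<surd>n\<close>.
\<close>

lemma sq_recurrence_sum_bound:
  fixes d a :: "nat \<Rightarrow> real"
  assumes "d 0 = 0" and step: "\<And>t. d (Suc t)^2 \<le> d t^2 + b * d t * a t + c^2"
  shows "d t^2 \<le> (\<Sum>s<t. b * d s * a s) + c^2 * real t"
proof (induction t)
  case 0
  show ?case using assms(1) by simp
next
  case (Suc t)
  then show ?case using step[of t] by (simp add: algebra_simps)
qed

lemma sq_recurrence_bound:
  fixes d a :: "nat \<Rightarrow> real"
  assumes "d 0 = 0" and step: "\<And>t. d (Suc t)^2 \<le> d t^2 + b * d t * a t + c^2"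
    and a_nonneg: "\<And>t. 0 \<le> a t" and b_nonneg: "0 \<le> b" and c_nonneg: "0 \<le> c"
  shows "d t \<le> b * (\<Sum>s<t. a s) + c * sqrt (real t)"
proof (induction t rule: less_induct)
  case (less t)
  define P where "P = b * (\<Sum>s<t. a s)"
  define q where "q = c * sqrt (real t)"
  have "0 \<le> P" "0 \<le> q"
    using a_nonneg b_nonneg c_nonneg by (auto simp: P_def q_def sum_nonneg)
  have earlier: "d s \<le> P + q" if "s < t" for s
  proof -
    have "(\<Sum>i<s. a i) \<le> (\<Sum>i<t. a i)"
      using that a_nonneg by (intro sum_mono2) auto
    then have "b * (\<Sum>i<s. a i) + c * sqrt (real s) \<le> P + q"
      using that b_nonneg c_nonneg unfolding P_def q_def by (intro add_mono mult_left_mono) auto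
    with less.IH[OF that] show ?thesis by linarith
  qed
  have "(\<Sum>s<t. b * d s * a s) \<le> (\<Sum>s<t. b * (P + q) * a s)"
    using earlier b_nonneg a_nonneg by (intro sum_mono mult_right_mono mult_left_mono) auto
  also have "\<dots> = b * (P + q) * (\<Sum>s<t. a s)"
    by (rule sum_distrib_left[symmetric])
  also have "\<dots> = (P + q) * P"
    by (simp only: P_def mult_ac)
  finally have "d t^2 \<le> (P + q) * P + q^2"
    using sq_recurrence_sum_bound[of d b a c t] assms(1) step
    by (simp add: q_def power_mult_distrib)
  also have "\<dots> \<le> (P + q)^2"
    using \<open>0 \<le> P\<close> \<open>0 \<le> q\<close> by (simp add: power2_eq_square algebra_simps)
  finally have "d t \<le> P + q"
    using \<open>0 \<le> P\<close> \<open>0 \<le> q\<close> by (meson power2_le_imp_le add_nonneg_nonneg)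
  then show ?case by (simp only: P_def q_def)
qed

lemma subgradient_norm_le:
  fixes h :: "'a::euclidean_space \<Rightarrow> real"
  assumes "is_subgradient h w v" and lip: "L-lipschitz_on UNIV h"
  shows "norm v \<le> L"
proof -
  have "h w + norm v^2 \<le> h (w + v)"
    using assms(1) unfolding is_subgradient_def by (metis add_diff_cancel_left' power2_norm_eq_inner)
  moreover have "h (w + v) - h w \<le> L * norm v"
    using lipschitz_onD[OF lip, of "w + v" w] by (simp add: dist_norm)
  ultimately have "norm v * norm v \<le> L * norm v"
    by (simp add: power2_eq_square)
  then show ?thesis
    using lipschitz_on_nonneg[OF lip] by (cases "norm v = 0") auto
qed

lemma subgradient_monotone:
  assumes "is_subgradient h u a" and "is_subgradient h v b"
  shows "0 \<le> inner (u - v) (a - b)"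
proof -
  have "h u + inner a (v - u) \<le> h v" and "h v + inner b (u - v) \<le> h u"
    using assms unfolding is_subgradient_def by auto
  then show ?thesis
    by (simp add: inner_diff_left inner_diff_right inner_commute)
qed

lemma (in prob_space) expectation_le_sqrt_second_moment:
  assumes "integrable M X" and "integrable M (\<lambda>x. (X x)^2)"
  shows "expectation X \<le> sqrt (expectation (\<lambda>x. (X x)^2))"
  using variance_eq[OF assms] variance_positive[of X] by (intro real_le_rsqrt) linarith

locale centered_bounded_rv = prob_space M for M :: "'z measure" +
  fixes h :: "'z \<Rightarrow> 'a::euclidean_space" and B :: real
  assumes measurable_h[measurable]: "h \<in> borel_measurable M"
    and norm_le: "\<And>z. z \<in> space M \<Longrightarrow> norm (h z) \<le> B"
    and expectation_zero: "expectation h = 0"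
begin

lemma B_nonneg: "0 \<le> B"
  using norm_le not_empty norm_ge_zero order_trans by blast

lemma integrable_h: "integrable M h"
  by (rule integrable_const_bound[where B=B]) (auto simp: norm_le)

lemma measurable_component_h[measurable]:
  "i \<in> I \<Longrightarrow> (\<lambda>S. h (S i)) \<in> borel_measurable (PiM I (\<lambda>_. M))"
  using measurable_compose[OF measurable_component_singleton[of i I "\<lambda>_. M"] measurable_h] by simp

lemma space_PiM_component: "S \<in> space (PiM I (\<lambda>_. M)) \<Longrightarrow> i \<in> I \<Longrightarrow> S i \<in> space M"
  by (auto simp: space_PiM PiE_iff)

lemma expectation_inner_indep_zero:
  assumes "finite I" "i \<in> I" "j \<in> I" "i \<noteq> j"
  shows "(\<integral>S. inner (h (S i)) (h (S j)) \<partial>PiM I (\<lambda>_. M)) = 0"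
proof -
  interpret product_sigma_finite "\<lambda>_. M"
    by (simp add: product_sigma_finite_def sigma_finite_measure_axioms)
  \<comment> \<open>Extend the product of the \<open>i\<close>- and \<open>j\<close>-th coordinates to a product over all of \<open>I\<close>,
    which the product measure factorises.\<close>
  define F where "F b k = (if k = i \<or> k = j then (\<lambda>z. h z \<bullet> b) else (\<lambda>z. 1))" for b k
  have integrable_F: "integrable M (F b k)" for b k
    using integrable_h by (auto simp: F_def)
  have prod_F: "(\<Prod>k\<in>I. F b k (S k)) = (h (S i) \<bullet> b) * (h (S j) \<bullet> b)" for b S
  proof -
    have "(\<Prod>k\<in>I. F b k (S k)) = (\<Prod>k\<in>{i, j}. F b k (S k))"
      using assms by (intro prod.mono_neutral_right) (auto simp: F_def)
    then show ?thesis using assms(4) by (simp add: F_def)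
  qed
  have coordinate: "(\<integral>S. (h (S i) \<bullet> b) * (h (S j) \<bullet> b) \<partial>PiM I (\<lambda>_. M)) = 0"
    and integrable_coordinate: "integrable (PiM I (\<lambda>_. M)) (\<lambda>S. (h (S i) \<bullet> b) * (h (S j) \<bullet> b))"
    for b
  proof -
    have "(\<integral>S. (h (S i) \<bullet> b) * (h (S j) \<bullet> b) \<partial>PiM I (\<lambda>_. M)) = (\<Prod>k\<in>I. integral\<^sup>L M (F b k))"
      unfolding prod_F[symmetric] using assms(1) integrable_F by (rule product_integral_prod)
    also have "\<dots> = 0"
      using assms integrable_h expectation_zero
      by (intro prod_zero bexI[of _ i]) (auto simp: F_def)
    finally show "(\<integral>S. (h (S i) \<bullet> b) * (h (S j) \<bullet> b) \<partial>PiM I (\<lambda>_. M)) = 0" .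
    show "integrable (PiM I (\<lambda>_. M)) (\<lambda>S. (h (S i) \<bullet> b) * (h (S j) \<bullet> b))"
      unfolding prod_F[symmetric] using assms(1) integrable_F by (rule product_integrable_prod)
  qed
  have "(\<integral>S. inner (h (S i)) (h (S j)) \<partial>PiM I (\<lambda>_. M))
      = (\<integral>S. (\<Sum>b\<in>Basis. (h (S i) \<bullet> b) * (h (S j) \<bullet> b)) \<partial>PiM I (\<lambda>_. M))"
    by (intro Bochner_Integration.integral_cong refl euclidean_inner)
  also have "\<dots> = 0"
    by (simp add: integrable_coordinate coordinate)
  finally show ?thesis .
qed

lemma expectation_norm_sum_sq_le:
  assumes "finite I"
  shows "(\<integral>S. norm (\<Sum>i\<in>I. h (S i))^2 \<partial>PiM I (\<lambda>_. M)) \<le> real (card I) * B^2"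
proof -
  interpret P: prob_space "PiM I (\<lambda>_. M)"
    by (rule prob_space_PiM) (rule prob_space_axioms)
  have norm_le_component: "norm (h (S i)) \<le> B" if "S \<in> space (PiM I (\<lambda>_. M))" "i \<in> I" for S i
    using norm_le space_PiM_component[OF that] .
  have integrable_inner: "integrable (PiM I (\<lambda>_. M)) (\<lambda>S. inner (h (S i)) (h (S j)))"
    if "i \<in> I" "j \<in> I" for i j
  proof (rule P.integrable_const_bound[where B="B * B"])
    show "AE S in PiM I (\<lambda>_. M). norm (inner (h (S i)) (h (S j))) \<le> B * B"
    proof (rule AE_I2)
      fix S assume "S \<in> space (PiM I (\<lambda>_. M))"
      then have "norm (h (S i)) * norm (h (S j)) \<le> B * B"
        using that norm_le_component B_nonneg by (intro mult_mono) auto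
      then show "norm (inner (h (S i)) (h (S j))) \<le> B * B"
        using Cauchy_Schwarz_ineq2[of "h (S i)" "h (S j)"] by simp
    qed
  qed (use that in measurable)
  have diagonal: "(\<integral>S. inner (h (S i)) (h (S i)) \<partial>PiM I (\<lambda>_. M)) \<le> B^2" if "i \<in> I" for i
  proof -
    have "(\<integral>S. inner (h (S i)) (h (S i)) \<partial>PiM I (\<lambda>_. M)) \<le> (\<integral>S. B^2 \<partial>PiM I (\<lambda>_. M))"
    proof (rule integral_mono)
      fix S assume "S \<in> space (PiM I (\<lambda>_. M))"
      then have "norm (h (S i))^2 \<le> B^2"
        using norm_le_component that by (intro power_mono) auto
      then show "inner (h (S i)) (h (S i)) \<le> B^2"
        by (simp add: power2_norm_eq_inner)
    qed (use that integrable_inner in auto)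
    then show ?thesis by (simp add: P.prob_space)
  qed
  have "(\<integral>S. norm (\<Sum>i\<in>I. h (S i))^2 \<partial>PiM I (\<lambda>_. M))
      = (\<integral>S. (\<Sum>i\<in>I. \<Sum>j\<in>I. inner (h (S i)) (h (S j))) \<partial>PiM I (\<lambda>_. M))"
    unfolding power2_norm_eq_inner inner_sum_left inner_sum_right by (subst sum.swap) (rule refl)
  also have "\<dots> = (\<Sum>i\<in>I. (\<integral>S. (\<Sum>j\<in>I. inner (h (S i)) (h (S j))) \<partial>PiM I (\<lambda>_. M)))"
    by (rule Bochner_Integration.integral_sum) (auto intro: integrable_inner)
  also have "\<dots> = (\<Sum>i\<in>I. \<Sum>j\<in>I. (\<integral>S. inner (h (S i)) (h (S j)) \<partial>PiM I (\<lambda>_. M)))"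
    by (intro sum.cong refl Bochner_Integration.integral_sum) (auto intro!: integrable_inner)
  also have "\<dots> = (\<Sum>i\<in>I. (\<integral>S. inner (h (S i)) (h (S i)) \<partial>PiM I (\<lambda>_. M)))"
  proof (intro sum.cong refl)
    fix i assume "i \<in> I"
    then have "(\<Sum>j\<in>I. (\<integral>S. inner (h (S i)) (h (S j)) \<partial>PiM I (\<lambda>_. M)))
        = (\<Sum>j\<in>I. if j = i then (\<integral>S. inner (h (S i)) (h (S i)) \<partial>PiM I (\<lambda>_. M)) else 0)"
      using expectation_inner_indep_zero[OF assms] by (intro sum.cong) auto
    then show "(\<Sum>j\<in>I. (\<integral>S. inner (h (S i)) (h (S j)) \<partial>PiM I (\<lambda>_. M)))
        = (\<integral>S. inner (h (S i)) (h (S i)) \<partial>PiM I (\<lambda>_. M))"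
      using assms \<open>i \<in> I\<close> by simp
  qed
  also have "\<dots> \<le> (\<Sum>i\<in>I. B^2)"
    using diagonal by (rule sum_mono)
  finally show ?thesis by simp
qed

lemma norm_mean_le:
  assumes "finite I" "I \<noteq> {}" "S \<in> space (PiM I (\<lambda>_. M))"
  shows "norm ((1 / card I) *\<^sub>R (\<Sum>i\<in>I. h (S i))) \<le> B"
proof -
  have "norm (\<Sum>i\<in>I. h (S i)) \<le> (\<Sum>i\<in>I. B)"
    using norm_le space_PiM_component[OF assms(3)] by (intro order_trans[OF norm_sum sum_mono]) auto
  then show ?thesis
    using assms(1,2) by (simp add: field_simps card_gt_0_iff)
qed

lemma integrable_norm_mean:
  assumes "finite I" "I \<noteq> {}"
  shows "integrable (PiM I (\<lambda>_. M)) (\<lambda>S. norm ((1 / card I) *\<^sub>R (\<Sum>i\<in>I. h (S i))))"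
proof -
  interpret P: prob_space "PiM I (\<lambda>_. M)"
    by (rule prob_space_PiM) (rule prob_space_axioms)
  show ?thesis
    using norm_mean_le[OF assms] by (intro P.integrable_const_bound[where B=B] AE_I2) auto
qed

lemma expectation_norm_mean_le:
  assumes "finite I" "I \<noteq> {}"
  shows "(\<integral>S. norm ((1 / card I) *\<^sub>R (\<Sum>i\<in>I. h (S i))) \<partial>PiM I (\<lambda>_. M)) \<le> B / sqrt (card I)"
proof -
  interpret P: prob_space "PiM I (\<lambda>_. M)"
    by (rule prob_space_PiM) (rule prob_space_axioms)
  let ?X = "\<lambda>S. norm ((1 / card I) *\<^sub>R (\<Sum>i\<in>I. h (S i)))"
  have card_pos: "0 < real (card I)" using assms by (simp add: card_gt_0_iff)
  have integrable_X2: "integrable (PiM I (\<lambda>_. M)) (\<lambda>S. (?X S)^2)"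
    using norm_mean_le[OF assms] B_nonneg
    by (intro P.integrable_const_bound[where B="B^2"] AE_I2) (auto intro!: power_mono)
  have "(\<integral>S. (?X S)^2 \<partial>PiM I (\<lambda>_. M))
      = (\<integral>S. norm (\<Sum>i\<in>I. h (S i))^2 \<partial>PiM I (\<lambda>_. M)) / (card I)^2"
    by (simp add: power_divide)
  also have "\<dots> \<le> real (card I) * B^2 / (card I)^2"
    using expectation_norm_sum_sq_le[OF assms(1)] by (rule divide_right_mono) simp
  also have "\<dots> = (B / sqrt (card I))^2"
    using card_pos by (simp add: power_divide power2_eq_square)
  finally have "sqrt (\<integral>S. (?X S)^2 \<partial>PiM I (\<lambda>_. M)) \<le> sqrt ((B / sqrt (card I))^2)"
    by (rule real_sqrt_le_mono)
  also have "\<dots> = B / sqrt (card I)"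
    using B_nonneg by simp
  finally show ?thesis
    using P.expectation_le_sqrt_second_moment[OF integrable_norm_mean[OF assms] integrable_X2] by linarith
qed

end

locale lipschitz_subgradient_gd =
  fixes D :: "'z measure" and f :: "'a::euclidean_space \<Rightarrow> 'z \<Rightarrow> real"
    and g :: "'a \<Rightarrow> 'z \<Rightarrow> 'a" and L \<eta> :: real and n :: nat
  assumes prob_space_D: "prob_space D"
    and lipschitz: "\<forall>z\<in>space D. L-lipschitz_on UNIV (\<lambda>w. f w z)"
    and subgradient: "\<forall>z\<in>space D. \<forall>w. is_subgradient (\<lambda>u. f u z) w (g w z)"
    and measurable_g: "(\<lambda>(w, z). g w z) \<in> borel_measurable (borel \<Otimes>\<^sub>M D)"
    and eta_pos: "0 < \<eta>" and n_pos: "1 \<le> n"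
begin

sublocale prob_space D
  by (rule prob_space_D)

definition pop_grad :: "'a \<Rightarrow> 'a" where
  "pop_grad w = expectation (g w)"

definition emp_grad :: "(nat \<Rightarrow> 'z) \<Rightarrow> 'a \<Rightarrow> 'a" where
  "emp_grad S w = (1 / real n) *\<^sub>R (\<Sum>i<n. g w (S i))"

definition grad_deviation :: "nat \<Rightarrow> (nat \<Rightarrow> 'z) \<Rightarrow> 'a" where
  "grad_deviation t S = emp_grad S (gd_pop \<eta> g D t) - pop_grad (gd_pop \<eta> g D t)"

lemma L_nonneg: "0 \<le> L"
  using lipschitz not_empty lipschitz_on_nonneg by blast

lemma norm_g_le: "z \<in> space D \<Longrightarrow> norm (g w z) \<le> L"
  using subgradient lipschitz by (blast intro: subgradient_norm_le)

lemma measurable_g_at[measurable]: "g w \<in> borel_measurable D"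
  using measurable_Pair2[OF measurable_g, of w] by simp

lemma integrable_g: "integrable D (g w)"
  by (rule integrable_const_bound[where B=L]) (auto simp: norm_g_le)

lemma norm_pop_grad_le: "norm (pop_grad w) \<le> L"
proof -
  have "norm (pop_grad w) \<le> expectation (\<lambda>z. norm (g w z))"
    unfolding pop_grad_def by (rule integral_norm_bound)
  also have "\<dots> \<le> expectation (\<lambda>_. L)"
    by (rule integral_mono) (auto simp: norm_g_le integrable_g)
  finally show ?thesis by (simp add: prob_space)
qed

lemma norm_emp_grad_le:
  assumes "\<forall>i<n. S i \<in> space D"
  shows "norm (emp_grad S w) \<le> L"
proof -
  have "norm (\<Sum>i<n. g w (S i)) \<le> (\<Sum>i<n. L)"
    using assms norm_g_le by (intro order_trans[OF norm_sum sum_mono]) auto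
  then show ?thesis
    using n_pos by (simp add: emp_grad_def field_simps)
qed

lemma emp_grad_monotone:
  assumes "\<forall>i<n. S i \<in> space D"
  shows "0 \<le> inner (u - v) (emp_grad S u - emp_grad S v)"
proof -
  have "inner (u - v) (emp_grad S u - emp_grad S v)
      = (\<Sum>i<n. inner (u - v) (g u (S i) - g v (S i))) / real n"
    by (simp add: emp_grad_def inner_sum_right inner_diff_right sum_subtractf diff_divide_distrib)
  also have "0 \<le> \<dots>"
    using assms subgradient by (intro divide_nonneg_nonneg sum_nonneg subgradient_monotone) auto
  finally show ?thesis .
qed

lemma gd_dist_step:
  assumes S: "\<forall>i<n. S i \<in> space D"
  defines "d \<equiv> \<lambda>t. norm (gd_sample \<eta> g n S t - gd_pop \<eta> g D t)"
  shows "d (Suc t)^2 \<le> d t^2 + 2 * \<eta> * d t * norm (grad_deviation t S) + (2 * \<eta> * L)^2"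
proof -
  define u where "u = gd_sample \<eta> g n S t"
  define v where "v = gd_pop \<eta> g D t"
  define X where "X = emp_grad S u - pop_grad v"
  have d_Suc: "d (Suc t) = norm ((u - v) - \<eta> *\<^sub>R X)"
    by (simp add: d_def u_def v_def X_def emp_grad_def pop_grad_def algebra_simps)
  have "X = (emp_grad S u - emp_grad S v) + grad_deviation t S"
    by (simp add: X_def grad_deviation_def v_def)
  then have "- (norm (u - v) * norm (grad_deviation t S)) \<le> inner (u - v) X"
    using emp_grad_monotone[OF S, of u v] Cauchy_Schwarz_ineq2[of "u - v" "grad_deviation t S"]
    by (simp add: inner_add_right abs_le_iff)
  then have cross: "- (2 * \<eta> * inner (u - v) X) \<le> 2 * \<eta> * norm (u - v) * norm (grad_deviation t S)"
    using mult_left_mono[of _ _ "2 * \<eta>"] eta_pos by fastforce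
  have "norm X \<le> 2 * L"
    using norm_triangle_ineq4[of "emp_grad S u" "pop_grad v"] norm_emp_grad_le[OF S, of u]
      norm_pop_grad_le[of v] by (simp add: X_def)
  then have "norm X^2 \<le> (2 * L)^2"
    by (intro power_mono) simp_all
  from mult_left_mono[OF this, of "\<eta>^2"] have "\<eta>^2 * norm X^2 \<le> (2 * \<eta> * L)^2"
    by (simp add: power_mult_distrib mult_ac)
  moreover have "d (Suc t)^2 = norm (u - v)^2 - 2 * \<eta> * inner (u - v) X + \<eta>^2 * norm X^2"
    using dot_norm_neg[of "u - v" "\<eta> *\<^sub>R X"] by (simp add: d_Suc power_mult_distrib)
  moreover have "d t = norm (u - v)"
    by (simp add: d_def u_def v_def)
  ultimately show ?thesis
    using cross by simp
qed

lemma gd_dist_le: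
  assumes "\<forall>i<n. S i \<in> space D"
  shows "norm (gd_sample \<eta> g n S t - gd_pop \<eta> g D t)
    \<le> 2 * \<eta> * (\<Sum>s<t. norm (grad_deviation s S)) + 2 * \<eta> * L * sqrt (real t)"
  using gd_dist_step[OF assms] eta_pos L_nonneg
  by (intro sq_recurrence_bound[where d = "\<lambda>t. norm (gd_sample \<eta> g n S t - gd_pop \<eta> g D t)"]) auto

lemma centered_bounded_grad: "centered_bounded_rv D (\<lambda>z. g w z - pop_grad w) (2 * L)"
proof
  show "norm (g w z - pop_grad w) \<le> 2 * L" if "z \<in> space D" for z
    using norm_triangle_ineq4[of "g w z" "pop_grad w"] norm_g_le[OF that, of w] norm_pop_grad_le[of w]
    by simp
  show "expectation (\<lambda>z. g w z - pop_grad w) = 0"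
    using integrable_g[of w] by (simp add: pop_grad_def prob_space)
qed simp

lemma grad_deviation_eq_mean:
  "grad_deviation t S
    = (1 / card {..<n}) *\<^sub>R (\<Sum>i\<in>{..<n}. g (gd_pop \<eta> g D t) (S i) - pop_grad (gd_pop \<eta> g D t))"
  using n_pos by (simp add: grad_deviation_def emp_grad_def sum_subtractf scaleR_diff_right sum_constant_scaleR)

lemma integrable_norm_grad_deviation:
  "integrable (PiM {..<n} (\<lambda>_. D)) (\<lambda>S. norm (grad_deviation t S))"
proof -
  interpret centered_bounded_rv D "\<lambda>z. g (gd_pop \<eta> g D t) z - pop_grad (gd_pop \<eta> g D t)" "2 * L"
    by (rule centered_bounded_grad)
  show ?thesis
    unfolding grad_deviation_eq_mean using n_pos by (intro integrable_norm_mean) (auto simp: lessThan_empty_iff)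
qed

lemma expectation_norm_grad_deviation_le:
  "(\<integral>S. norm (grad_deviation t S) \<partial>PiM {..<n} (\<lambda>_. D)) \<le> 2 * L / sqrt (real n)"
proof -
  interpret centered_bounded_rv D "\<lambda>z. g (gd_pop \<eta> g D t) z - pop_grad (gd_pop \<eta> g D t)" "2 * L"
    by (rule centered_bounded_grad)
  show ?thesis
    unfolding grad_deviation_eq_mean using n_pos expectation_norm_mean_le[of "{..<n}"]
    by (simp add: lessThan_empty_iff)
qed

lemma expectation_gd_dist_le:
  "(\<integral>S. norm (gd_sample \<eta> g n S t - gd_pop \<eta> g D t) \<partial>PiM {..<n} (\<lambda>_. D))
    \<le> 4 * \<eta> * L * real t / sqrt (real n) + 4 * \<eta> * L * sqrt (real t)"
proof -
  interpret P: prob_space "PiM {..<n} (\<lambda>_. D)"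
    by (rule prob_space_PiM) (rule prob_space_D)
  define bound where
    "bound S = 2 * \<eta> * (\<Sum>s<t. norm (grad_deviation s S)) + 2 * \<eta> * L * sqrt (real t)" for S
  have integrable_bound: "integrable (PiM {..<n} (\<lambda>_. D)) bound"
    unfolding bound_def by (intro Bochner_Integration.integrable_add Bochner_Integration.integrable_mult_right
        Bochner_Integration.integrable_sum integrable_norm_grad_deviation) simp
  have "(\<integral>S. bound S \<partial>PiM {..<n} (\<lambda>_. D))
      = 2 * \<eta> * (\<Sum>s<t. \<integral>S. norm (grad_deviation s S) \<partial>PiM {..<n} (\<lambda>_. D)) + 2 * \<eta> * L * sqrt (real t)"
    unfolding bound_def
    by (simp add: integrable_norm_grad_deviation P.prob_space)
  also have "\<dots> \<le> 2 * \<eta> * (\<Sum>s<t. 2 * L / sqrt (real n)) + 2 * \<eta> * L * sqrt (real t)"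
    using eta_pos expectation_norm_grad_deviation_le by (intro add_right_mono mult_left_mono sum_mono) auto
  also have "\<dots> = 4 * \<eta> * L * real t / sqrt (real n) + 2 * \<eta> * L * sqrt (real t)"
    by simp
  also have "\<dots> \<le> 4 * \<eta> * L * real t / sqrt (real n) + 4 * \<eta> * L * sqrt (real t)"
    using eta_pos L_nonneg by simp
  finally have expectation_bound: "(\<integral>S. bound S \<partial>PiM {..<n} (\<lambda>_. D))
      \<le> 4 * \<eta> * L * real t / sqrt (real n) + 4 * \<eta> * L * sqrt (real t)" .
  show ?thesis
  proof (cases "integrable (PiM {..<n} (\<lambda>_. D)) (\<lambda>S. norm (gd_sample \<eta> g n S t - gd_pop \<eta> g D t))")
    case True
    have "(\<integral>S. norm (gd_sample \<eta> g n S t - gd_pop \<eta> g D t) \<partial>PiM {..<n} (\<lambda>_. D))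
        \<le> (\<integral>S. bound S \<partial>PiM {..<n} (\<lambda>_. D))"
      using True integrable_bound
    proof (rule integral_mono)
      fix S assume "S \<in> space (PiM {..<n} (\<lambda>_. D))"
      then show "norm (gd_sample \<eta> g n S t - gd_pop \<eta> g D t) \<le> bound S"
        unfolding bound_def by (intro gd_dist_le) (auto simp: space_PiM PiE_iff)
    qed
    with expectation_bound show ?thesis by linarith
  next
    case False
    \<comment> \<open>The Bochner integral of a non-integrable function is \<open>0\<close>.\<close>
    then show ?thesis
      using eta_pos L_nonneg by (simp add: not_integrable_integral_eq)
  qed
qed

end

theorem lemma5p1:
  fixes D :: "'z measure"
    and f :: "'a::euclidean_space \<Rightarrow> 'z \<Rightarrow> real"
    and g :: "'a \<Rightarrow> 'z \<Rightarrow> 'a"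
    and L \<eta> :: real and T n :: nat
  assumes "prob_space D"
    and "\<forall>z\<in>space D. convex_on UNIV (\<lambda>w. f w z)"
    and "\<forall>z\<in>space D. L-lipschitz_on UNIV (\<lambda>w. f w z)"
    and "\<forall>z\<in>space D. \<forall>w. is_subgradient (\<lambda>u. f u z) w (g w z)"
    and "(\<lambda>(w, z). g w z) \<in> borel_measurable (borel \<Otimes>\<^sub>M D)"
    and "\<eta> > 0"
    and "n \<ge> 1"
  shows "\<forall>t\<in>{1..T}.
           (\<integral>S. norm (gd_sample \<eta> g n S t - gd_pop \<eta> g D t) \<partial>(PiM {..<n} (\<lambda>_. D)))
             \<le> 4 * \<eta> * L * real t / sqrt (real n) + 4 * \<eta> * L * sqrt (real t)"
proof -
  interpret lipschitz_subgradient_gd D f g L \<eta> n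
    using assms(1,3-7) by (simp add: lipschitz_subgradient_gd_def)
  show ?thesis
    using expectation_gd_dist_le by blast
qed

end
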